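(* Suppose Assumption (A1) holds and, in addition, $A$ is $\rho$-strongly monotone w.r.t. $S$ for some $\rho>0$, i.e. $\langle u-v,x-y\rangle\ge\rho\|x-y\|_S^2$ for all $(x,u),(y,v)\in\operatorname{gra}A$. Assume $\bar L:=\sup_k L_k<1$ and that there exist $\varepsilon_1,\varepsilon_2>0$ and $t>0$ such that for every integer $k\ge1$: $\gamma_k<1/\varepsilon_1$, $$t\Big(1+\frac{L_k}{\varepsilon_2}\Big)\le 2\gamma_k\rho(1-\gamma_k\varepsilon_1),\qquad t\,L_k(\varepsilon_2+1)\le \kappa_k+\nu_k,$$ where $\kappa_k=1-L_{k-1}-L_k-2\gamma_kL_k\mu-\gamma_k^2\mu^2-\frac{\gamma_k\beta}{2}$ and $\nu_k=2\gamma_k^2\rho\mu^2\big(\gamma_k-\frac1{\varepsilon_1}\big)$. Let $x^*\in\operatorname{zer}(A+B+C)$. Then for any $x_0,u_0\in\mathcal H$ the sequences generated by Algorithm NFBHF-M satisfy, for all $k\ge1$, $$(1-L_k)\|x_{k+1}-x^*\|_S^2\le\frac{\Phi_1(x^* )}{(1+t)^k},$$ where $\Phi_1(x^* )=\|x_1-x^*\|_S^2+2\langle u_1,x_1-x^*\rangle+L_0\|y_0-x_0\|_S^2$; in particular $\{x_k\}$ converges $R$-linearly to $x^*$.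
   Context: $\mathcal H$ is a real Hilbert space. $\mathcal P(\mathcal H)$ denotes the set of bounded linear operators $S:\mathcal H\to\mathcal H$ that are self-adjoint and strongly positive ($\langle Sx,x\rangle\ge m\|x\|^2$ for some $m>0$ and all $x$); for such $S$, $S^{-1}\in\mathcal P(\mathcal H)$, $\langle x,y\rangle_S:=\langle Sx,y\rangle$ and $\|x\|_S:=\sqrt{\langle Sx,x\rangle}$. For $S\in\mathcal P(\mathcal H)$, a single-valued $T:\mathcal H\to\mathcal H$ is $L$-Lipschitz continuous w.r.t. $S$ if $\|Tx-Ty\|_{S^{-1}}\le L\|x-y\|_S$ for all $x,y$, and is $\beta^{-1}$-cocoercive w.r.t. $S$ ($\beta>0$) if $\langle Tx-Ty,x-y\rangle\ge \beta^{-1}\|Tx-Ty\|_{S^{-1}}^2$ for all $x,y$. $\operatorname{gra}A=\{(x,u):u\in Ax\}$; $\operatorname{zer}(A+B+C)=\{x\in\mathcal H: 0\in Ax+Bx+Cx\}$. Assumption (A1): fix $S\in\mathcal P(\mathcal H)$. (i) $A:\mathcal H\to2^{\mathcal H}$ is maximally monotone; (ii) $B:\mathcal H\to\mathcal H$ is single-valued, monotone and $\mu$-Lipschitz continuous w.r.t. $S$ ($\mu\ge0$); (iii) $C:\mathcal H\to\mathcal H$ is $\beta^{-1}$-cocoercive w.r.t. $S$ for some $\beta>0$; (iv) $\operatorname{zer}(A+B+C)\neq\emptyset$; (v) there is $\gamma>0$ and, for each $k\in\mathbb N$, a step-size $\gamma_k\ge\gamma$, a constant $L_k\in[0,1)$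 and a (possibly nonlinear) operator $M_k:\mathcal H\to\mathcal H$ such that $\gamma_kM_k-S$ is $L_k$-Lipschitz continuous w.r.t. $S$. (Under (v), $(M_k+A)^{-1}$ is single-valued with full domain.) Algorithm NFBHF-M: given $x_0,u_0\in\mathcal H$, for $k=0,1,2,\dots$ $$y_k=(M_k+A)^{-1}\big(M_kx_k-(B+C)x_k+\gamma_k^{-1}u_k\big),\quad x_{k+1}=y_k-\gamma_kS^{-1}By_k+\gamma_kS^{-1}Bx_k,\quad u_{k+1}=(\gamma_kM_k-S)y_k-(\gamma_kM_k-S)x_k.$$ *)

theory Defs
  imports "HOL-Analysis.Analysis"
begin

definition self_adjoint :: "('a::real_inner \<Rightarrow> 'a) \<Rightarrow> bool" where
  "self_adjoint S \<longleftrightarrow> (\<forall>x y. inner (S x) y = inner x (S y))"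

definition strongly_pos_op :: "('a::{real_inner,complete_space} \<Rightarrow> 'a) \<Rightarrow> bool" where
  "strongly_pos_op S \<longleftrightarrow> bounded_linear S \<and> self_adjoint S \<and>
     (\<exists>m>0. \<forall>x. inner (S x) x \<ge> m * (norm x)\<^sup>2)"

definition inner_S :: "('a::real_inner \<Rightarrow> 'a) \<Rightarrow> 'a \<Rightarrow> 'a \<Rightarrow> real" where
  "inner_S S x y = inner (S x) y"

definition norm_S :: "('a::real_inner \<Rightarrow> 'a) \<Rightarrow> 'a \<Rightarrow> real" where
  "norm_S S x = sqrt (inner (S x) x)"

text \<open>Inverse operator S^{-1} (S is bijective when strongly positive).\<close>
definition op_inv :: "('a \<Rightarrow> 'a) \<Rightarrow> 'a \<Rightarrow> 'a" where
  "op_inv S = inv S"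

definition lipschitz_wrt :: "('a::real_inner \<Rightarrow> 'a) \<Rightarrow> real \<Rightarrow> ('a \<Rightarrow> 'a) \<Rightarrow> bool" where
  "lipschitz_wrt S L T \<longleftrightarrow> (\<forall>x y. norm_S (op_inv S) (T x - T y) \<le> L * norm_S S (x - y))"

definition cocoercive_wrt :: "('a::real_inner \<Rightarrow> 'a) \<Rightarrow> real \<Rightarrow> ('a \<Rightarrow> 'a) \<Rightarrow> bool" where
  "cocoercive_wrt S \<beta> T \<longleftrightarrow> \<beta> > 0 \<and>
     (\<forall>x y. inner (T x - T y) (x - y) \<ge> (1 / \<beta>) * (norm_S (op_inv S) (T x - T y))\<^sup>2)"

definition gra :: "('a \<Rightarrow> 'b set) \<Rightarrow> ('a \<times> 'b) set" where
  "gra A = {(x, u). u \<in> A x}"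

definition monotone_op :: "('a::real_inner \<Rightarrow> 'a set) \<Rightarrow> bool" where
  "monotone_op A \<longleftrightarrow> (\<forall>(x,u)\<in>gra A. \<forall>(y,v)\<in>gra A. inner (u - v) (x - y) \<ge> 0)"

definition maximally_monotone :: "('a::real_inner \<Rightarrow> 'a set) \<Rightarrow> bool" where
  "maximally_monotone A \<longleftrightarrow> monotone_op A \<and>
     (\<forall>x u. (\<forall>(y,v)\<in>gra A. inner (u - v) (x - y) \<ge> 0) \<longrightarrow> u \<in> A x)"

definition monotone_single :: "('a::real_inner \<Rightarrow> 'a) \<Rightarrow> bool" where
  "monotone_single B \<longleftrightarrow> (\<forall>x y. inner (B x - B y) (x - y) \<ge> 0)"

definition strongly_monotone_wrt :: "('a::real_inner \<Rightarrow> 'a) \<Rightarrow> real \<Rightarrow> ('a \<Rightarrow> 'a set) \<Rightarrow> bool" where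
  "strongly_monotone_wrt S \<rho> A \<longleftrightarrow>
     (\<forall>(x,u)\<in>gra A. \<forall>(y,v)\<in>gra A. inner (u - v) (x - y) \<ge> \<rho> * (norm_S S (x - y))\<^sup>2)"

definition zer3 :: "('a::real_vector \<Rightarrow> 'a set) \<Rightarrow> ('a \<Rightarrow> 'a) \<Rightarrow> ('a \<Rightarrow> 'a) \<Rightarrow> 'a set" where
  "zer3 A B C = {x. \<exists>a\<in>A x. a + B x + C x = 0}"

text \<open>Sequences generated by NFBHF-M: the resolvent step y_k = (M_k + A)^{-1}(w_k)
  is expressed as  w_k \<in> M_k y_k + A y_k, i.e.  w_k - M_k y_k \<in> A y_k.\<close>
definition NFBHF_M :: "('a::real_inner \<Rightarrow> 'a) \<Rightarrow> ('a \<Rightarrow> 'a set) \<Rightarrow> ('a \<Rightarrow> 'a) \<Rightarrow> ('a \<Rightarrow> 'a)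
    \<Rightarrow> (nat \<Rightarrow> real) \<Rightarrow> (nat \<Rightarrow> 'a \<Rightarrow> 'a) \<Rightarrow> 'a \<Rightarrow> 'a
    \<Rightarrow> (nat \<Rightarrow> 'a) \<Rightarrow> (nat \<Rightarrow> 'a) \<Rightarrow> (nat \<Rightarrow> 'a) \<Rightarrow> bool" where
  "NFBHF_M S A B C \<gamma> M x0 u0 x y u \<longleftrightarrow>
     x 0 = x0 \<and> u 0 = u0 \<and>
     (\<forall>k. (M k (x k) - (B (x k) + C (x k)) + (1 / \<gamma> k) *\<^sub>R u k) - M k (y k) \<in> A (y k)
        \<and> x (Suc k) = y k - \<gamma> k *\<^sub>R op_inv S (B (y k)) + \<gamma> k *\<^sub>R op_inv S (B (x k))
        \<and> u (Suc k) = (\<gamma> k *\<^sub>R M k (y k) - S (y k)) - (\<gamma> k *\<^sub>R M k (x k) - S (x k)))"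

end

theory Submission
  imports Defs
begin

(* The quantity
     Phi_k = |x_k - x*|_S^2 + 2 <u_k, x_k - x*> + L_(k-1) |y_(k-1) - x_(k-1)|_S^2
   is a Lyapunov function for NFBHF-M. Testing the strong monotonicity of A at the resolvent
   point y_k against the solution, and using monotonicity of B, cocoercivity of C, the
   three-point identity for the S-inner product and the bound |u_(k+1)|_(S^-1) <= L_k |y_k - x_k|_S,
   gives Phi_k >= (1 + t) Phi_(k+1) under the step-size conditions. The same bound on u_(k+1) gives
   Phi_(k+1) >= (1 - L_k) |x_(k+1) - x*|_S^2, so the geometric decay of Phi transfers to the
   iterates, and sup L_k < 1 makes it R-linear. *)

lemma mult2_le_weighted_squares:
  fixes a b c :: real
  assumes "c > 0"
  shows "2 * a * b \<le> c * a\<^sup>2 + b\<^sup>2 / c"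
proof -
  have "0 \<le> (c * a - b)\<^sup>2 / c" using assms by simp
  also have "\<dots> = c * a\<^sup>2 - 2 * a * b + b\<^sup>2 / c"
    using assms by (simp add: power2_eq_square field_simps)
  finally show ?thesis by simp
qed

lemma power2_norm_diff_scaleR:
  fixes z w :: "'a::real_inner"
  shows "(norm (z - a *\<^sub>R w))\<^sup>2 = (norm z)\<^sup>2 - 2 * a * inner w z + a\<^sup>2 * (norm w)\<^sup>2"
  unfolding power2_norm_eq_inner
  by (simp add: inner_diff_left inner_diff_right inner_commute[of z w] power2_eq_square algebra_simps)

lemma geometric_decay:
  fixes f :: "nat \<Rightarrow> real"
  assumes "r > 0" and "\<And>k. k \<ge> m \<Longrightarrow> r * f (Suc k) \<le> f k"
  shows "f (m + k) \<le> f m / r ^ k"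
proof (induction k)
  case (Suc k)
  have "f (m + Suc k) \<le> f (m + k) / r"
    using assms(2)[of "m + k"] assms(1) by (simp add: field_simps)
  also have "\<dots> \<le> f m / r ^ Suc k"
    using divide_right_mono[OF Suc.IH, of r] assms(1) by (simp add: field_simps)
  finally show ?case .
qed simp

lemma eventually_geometric_imp_geometric:
  fixes e :: "nat \<Rightarrow> real"
  assumes "q > 0" and "\<And>k. k \<ge> m \<Longrightarrow> e k \<le> K * q ^ k"
  shows "\<exists>c \<ge> 0. \<forall>k. e k \<le> c * q ^ k"
proof (intro exI allI conjI)
  define c where "c = max 0 (max K (Max ((\<lambda>k. e k / q ^ k) ` {..m})))"
  show "0 \<le> c" by (simp add: c_def)
  fix k
  show "e k \<le> c * q ^ k"
  proof (cases "k \<le> m")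
    case True
    then have "e k / q ^ k \<le> c"
      unfolding c_def by (intro max.coboundedI2 max.coboundedI2 Max_ge) auto
    then show ?thesis using assms(1) by (simp add: divide_le_eq)
  next
    case False
    then have "e k \<le> K * q ^ k" using assms(2) by simp
    also have "\<dots> \<le> c * q ^ k"
      using assms(1) by (intro mult_right_mono) (simp_all add: c_def)
    finally show ?thesis .
  qed
qed

lemma R_linear_convergence:
  fixes e :: "nat \<Rightarrow> real"
  assumes "\<theta> > 0" "t > 0" and "\<And>k. k \<ge> 1 \<Longrightarrow> \<theta> * (e (Suc k))\<^sup>2 \<le> P / (1 + t) ^ k"
  shows "\<exists>c q. 0 \<le> c \<and> 0 < q \<and> q < 1 \<and> (\<forall>k. e k \<le> c * q ^ k)"
proof -
  define q K where "q = 1 / sqrt (1 + t)" and "K = max 0 P * (1 + t) / \<theta>"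
  have q: "0 < q" "q < 1" "q\<^sup>2 = 1 / (1 + t)"
    unfolding q_def using assms(2) by (simp_all add: power_divide)
  have K: "0 \<le> K" unfolding K_def using assms(1,2) by simp
  have "e k \<le> sqrt K * q ^ k" if "k \<ge> 2" for k
  proof -
    obtain j where k: "k = Suc j" and j: "j \<ge> 1" using \<open>k \<ge> 2\<close> by (cases k) auto
    have "(e k)\<^sup>2 \<le> P / (1 + t) ^ j / \<theta>"
      using assms(3)[OF j] unfolding k pos_le_divide_eq[OF assms(1)] by (simp add: mult.commute)
    also have "\<dots> \<le> max 0 P / (1 + t) ^ j / \<theta>"
      using assms(1,2) by (simp add: divide_right_mono)
    also have "\<dots> = K * (q\<^sup>2) ^ k"
      unfolding K_def q(3) k using assms(1,2) by (simp add: power_one_over)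
    also have "\<dots> = K * (q ^ k)\<^sup>2"
      by (metis power_even_eq power_mult)
    also have "\<dots> = (sqrt K * q ^ k)\<^sup>2"
      using K by (simp add: power_mult_distrib)
    finally show ?thesis
      by (rule power2_le_imp_le) (use q(1) K in simp)
  qed
  then obtain c where "c \<ge> 0" "\<forall>k. e k \<le> c * q ^ k"
    using eventually_geometric_imp_geometric[OF q(1)] by blast
  then show ?thesis using q(1,2) by blast
qed

locale strongly_positive_operator =
  fixes S :: "'a::{real_inner,complete_space} \<Rightarrow> 'a"
  assumes strongly_pos: "strongly_pos_op S"
begin

sublocale S: bounded_linear S
  using strongly_pos by (simp add: strongly_pos_op_def)

lemma inner_S_commute: "inner (S a) b = inner (S b) a"
  using strongly_pos by (simp add: strongly_pos_op_def self_adjoint_def inner_commute)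

lemma coercive: "\<exists>m>0. \<forall>x. m * (norm x)\<^sup>2 \<le> inner (S x) x"
  using strongly_pos by (simp add: strongly_pos_op_def)

lemma inner_S_self_nonneg: "0 \<le> inner (S x) x"
proof -
  obtain m where "m > 0" "m * (norm x)\<^sup>2 \<le> inner (S x) x" using coercive by blast
  then show ?thesis by (meson less_imp_le mult_nonneg_nonneg order_trans zero_le_power2)
qed

lemma inner_S_self_eq_0_iff: "inner (S x) x = 0 \<longleftrightarrow> x = 0"
proof
  assume "inner (S x) x = 0"
  moreover obtain m where "m > 0" "m * (norm x)\<^sup>2 \<le> inner (S x) x" using coercive by blast
  ultimately show "x = 0" by (simp add: mult_le_0_iff)
qed (simp add: S.zero)

lemma norm_S_nonneg: "0 \<le> norm_S S x"
  by (simp add: norm_S_def inner_S_self_nonneg)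

lemma power2_norm_S: "(norm_S S x)\<^sup>2 = inner (S x) x"
  by (simp add: norm_S_def inner_S_self_nonneg)

lemma norm_S_eq_0_iff: "norm_S S x = 0 \<longleftrightarrow> x = 0"
  by (simp add: norm_S_def inner_S_self_nonneg inner_S_self_eq_0_iff)

lemma norm_S_scaleR: "norm_S S (r *\<^sub>R x) = \<bar>r\<bar> * norm_S S x"
  by (simp add: norm_S_def S.scaleR real_sqrt_mult mult.assoc[symmetric])

lemma power2_norm_S_add:
  "(norm_S S (a + b))\<^sup>2 = (norm_S S a)\<^sup>2 + 2 * inner (S a) b + (norm_S S b)\<^sup>2"
  by (simp add: power2_norm_S S.add inner_add_left inner_add_right inner_S_commute[of b a])

lemma power2_norm_S_diff:
  "(norm_S S (a - b))\<^sup>2 = (norm_S S a)\<^sup>2 - 2 * inner (S a) b + (norm_S S b)\<^sup>2"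
  by (simp add: power2_norm_S S.diff inner_diff_left inner_diff_right inner_S_commute[of b a])

lemma three_point_identity:
  "2 * inner (S (a - b)) (c - z) = (norm_S S (a - z))\<^sup>2 - (norm_S S (b - z))\<^sup>2
     + (norm_S S (c - b))\<^sup>2 - (norm_S S (c - a))\<^sup>2"
  by (simp add: power2_norm_S S.diff inner_diff_left inner_diff_right
      inner_S_commute[of b a] inner_S_commute[of c a] inner_S_commute[of z a]
      inner_S_commute[of c b] inner_S_commute[of z b] inner_S_commute[of z c])

lemma abs_inner_S_le: "\<bar>inner (S a) b\<bar> \<le> norm_S S a * norm_S S b"
proof (cases "a = 0")
  case True
  then show ?thesis by (simp add: S.zero norm_S_nonneg)
next
  case False
  then have pos: "(norm_S S a)\<^sup>2 > 0"
    using norm_S_eq_0_iff norm_S_nonneg by (simp add: order_le_neq_trans)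
  define c where "c = inner (S a) b / (norm_S S a)\<^sup>2"
  have "0 \<le> (norm_S S (c *\<^sub>R a - b))\<^sup>2" by simp
  also have "\<dots> = (norm_S S b)\<^sup>2 - (inner (S a) b)\<^sup>2 / (norm_S S a)\<^sup>2"
    unfolding power2_norm_S_diff norm_S_scaleR power_mult_distrib S.scaleR c_def
    using pos by (simp add: power2_eq_square field_simps)
  finally have "(inner (S a) b)\<^sup>2 \<le> (norm_S S a * norm_S S b)\<^sup>2"
    using pos by (simp add: field_simps power_mult_distrib)
  then show ?thesis
    using abs_le_square_iff norm_S_nonneg by (metis abs_of_nonneg zero_le_mult_iff)
qed

lemma power2_norm_S_add_ge:
  assumes "\<delta> > 0"
  shows "(1 - \<delta>) * (norm_S S a)\<^sup>2 + (1 - 1 / \<delta>) * (norm_S S b)\<^sup>2 \<le> (norm_S S (a + b))\<^sup>2"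
proof -
  have "2 * (norm_S S a * norm_S S b) \<le> \<delta> * (norm_S S a)\<^sup>2 + (norm_S S b)\<^sup>2 / \<delta>"
    using mult2_le_weighted_squares[OF assms] by (simp add: mult.assoc)
  then show ?thesis
    using abs_inner_S_le[of a b] unfolding power2_norm_S_add by (simp add: algebra_simps)
qed

lemma contraction_exists:
  "\<exists>\<alpha> c. \<alpha> \<noteq> 0 \<and> 0 \<le> c \<and> c < 1 \<and> (\<forall>z. norm (z - \<alpha> *\<^sub>R S z) \<le> c * norm z)"
proof -
  obtain m where m: "m > 0" "\<And>x. m * (norm x)\<^sup>2 \<le> inner (S x) x"
    using coercive by blast
  obtain K0 where K0: "\<And>x. norm (S x) \<le> norm x * K0" using S.bounded by blast
  define K where "K = max K0 m"
  have K_bound: "norm (S x) \<le> norm x * K" for x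
    by (rule order_trans[OF K0]) (simp add: K_def mult_left_mono)
  have K: "m \<le> K" "K > 0"
    using m(1) by (auto simp: K_def)
  define \<alpha> c where "\<alpha> = m / K\<^sup>2" and "c = sqrt (1 - m\<^sup>2 / K\<^sup>2)"
  have \<alpha>: "\<alpha> > 0" unfolding \<alpha>_def using m(1) K(2) by simp
  have c: "0 \<le> c" "c < 1" "c\<^sup>2 = 1 - m\<^sup>2 / K\<^sup>2"
    unfolding c_def using m(1) K by (simp_all add: power_mono field_simps)
  have "norm (z - \<alpha> *\<^sub>R S z) \<le> c * norm z" for z
  proof -
    have "(norm (z - \<alpha> *\<^sub>R S z))\<^sup>2 = (norm z)\<^sup>2 - 2 * \<alpha> * inner (S z) z + \<alpha>\<^sup>2 * (norm (S z))\<^sup>2"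
      by (rule power2_norm_diff_scaleR)
    also have "\<dots> \<le> (norm z)\<^sup>2 - 2 * \<alpha> * (m * (norm z)\<^sup>2) + \<alpha>\<^sup>2 * (norm z * K)\<^sup>2"
    proof -
      have "2 * \<alpha> * (m * (norm z)\<^sup>2) \<le> 2 * \<alpha> * inner (S z) z"
        using m(2)[of z] \<alpha> by simp
      moreover have "\<alpha>\<^sup>2 * (norm (S z))\<^sup>2 \<le> \<alpha>\<^sup>2 * (norm z * K)\<^sup>2"
        using K_bound by (simp add: power_mono mult_left_mono)
      ultimately show ?thesis by linarith
    qed
    also have "\<dots> = (c * norm z)\<^sup>2"
      unfolding power_mult_distrib c(3) \<alpha>_def using K(2) by (simp add: field_simps power2_eq_square)
    finally show ?thesis
      by (rule power2_le_imp_le) (simp add: c(1))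
  qed
  then show ?thesis using \<alpha> c(1,2) by (intro exI[of _ \<alpha>] exI[of _ c]) simp
qed

lemma surj: "surj S"
  unfolding surj_def
proof
  fix v
  obtain \<alpha> c where \<alpha>: "\<alpha> \<noteq> 0" and c: "0 \<le> c" "c < 1"
    and contraction: "\<And>z. norm (z - \<alpha> *\<^sub>R S z) \<le> c * norm z"
    using contraction_exists by blast
  \<comment> \<open>Banach's fixed point theorem for \<open>z \<mapsto> z - \<alpha> (S z - v)\<close>, whose fixed point solves \<open>S z = v\<close>\<close>
  let ?f = "\<lambda>z. z - \<alpha> *\<^sub>R (S z - v)"
  have diff: "?f x - ?f y = (x - y) - \<alpha> *\<^sub>R S (x - y)" for x y
    by (simp add: S.diff scaleR_diff_right)
  have "\<forall>x y. dist (?f x) (?f y) \<le> c * dist x y"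
    unfolding dist_norm diff using contraction by blast
  then have "\<exists>!z. ?f z = z" by (rule banach_fix_type[OF c])
  then obtain z where "?f z = z" by blast
  with \<alpha> show "\<exists>z. v = S z" by auto
qed

lemma inj: "inj S"
  by (rule injI) (metis S.diff inner_S_self_eq_0_iff inner_zero_left right_minus_eq)

lemma S_op_inv [simp]: "S (op_inv S v) = v"
  by (simp add: op_inv_def surj surj_f_inv_f)

lemma op_inv_S [simp]: "op_inv S (S x) = x"
  by (simp add: op_inv_def inj)

lemma op_inv_diff: "op_inv S (a - b) = op_inv S a - op_inv S b"
  by (metis S.diff S_op_inv op_inv_S)

lemma norm_S_op_inv: "norm_S (op_inv S) v = norm_S S (op_inv S v)"
  by (metis S_op_inv inner_commute norm_S_def)

lemma abs_inner_le_dual_norm_S: "\<bar>inner v z\<bar> \<le> norm_S (op_inv S) v * norm_S S z"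
  using abs_inner_S_le[of "op_inv S v" z] by (simp add: norm_S_op_inv)

lemma cocoercive_inner_ge:
  assumes "cocoercive_wrt S \<beta> C"
  shows "- (\<beta> / 4) * (norm_S S (y - x))\<^sup>2 \<le> inner (C x - C z) (y - z)"
proof -
  define w D where "w = norm_S (op_inv S) (C x - C z)" and "D = norm_S S (y - x)"
  have \<beta>: "\<beta> > 0" and coco: "w\<^sup>2 / \<beta> \<le> inner (C x - C z) (x - z)"
    using assms unfolding cocoercive_wrt_def w_def by simp_all
  have "\<bar>inner (C x - C z) (y - x)\<bar> \<le> w * D"
    unfolding w_def D_def by (rule abs_inner_le_dual_norm_S)
  moreover have "2 * w * D \<le> (2 / \<beta>) * w\<^sup>2 + D\<^sup>2 / (2 / \<beta>)"
    using \<beta> by (intro mult2_le_weighted_squares) simp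
  then have "w * D \<le> w\<^sup>2 / \<beta> + \<beta> / 4 * D\<^sup>2"
    by (simp add: field_simps)
  moreover have "inner (C x - C z) (y - z) = inner (C x - C z) (x - z) + inner (C x - C z) (y - x)"
    by (simp add: inner_diff_right)
  ultimately show ?thesis
    using coco unfolding D_def by linarith
qed

lemma forward_step_le:
  assumes "lipschitz_wrt S \<mu> B" "\<gamma> \<ge> 0"
    and "x' = y - \<gamma> *\<^sub>R op_inv S (B y) + \<gamma> *\<^sub>R op_inv S (B x)"
  shows "norm_S S (y - x') \<le> \<gamma> * \<mu> * norm_S S (y - x)"
proof -
  have "y - x' = \<gamma> *\<^sub>R op_inv S (B y - B x)"
    using assms(3) by (simp add: op_inv_diff scaleR_diff_right)
  then have "norm_S S (y - x') = \<gamma> * norm_S (op_inv S) (B y - B x)"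
    using assms(2) by (simp add: norm_S_scaleR norm_S_op_inv)
  also have "\<dots> \<le> \<gamma> * (\<mu> * norm_S S (y - x))"
    using assms(1,2) unfolding lipschitz_wrt_def by (simp add: mult_left_mono)
  finally show ?thesis by simp
qed

lemma norm_resolvent_point_ge:
  assumes "lipschitz_wrt S \<mu> B" "\<gamma> > 0" "\<epsilon>1 > 0" "\<gamma> < 1 / \<epsilon>1"
    and fwd: "x' = y - \<gamma> *\<^sub>R op_inv S (B y) + \<gamma> *\<^sub>R op_inv S (B x)"
  shows "(1 - \<gamma> * \<epsilon>1) * (norm_S S (x' - z))\<^sup>2 + \<gamma> * \<mu>\<^sup>2 * (\<gamma> - 1 / \<epsilon>1) * (norm_S S (y - x))\<^sup>2
    \<le> (norm_S S (y - z))\<^sup>2"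
proof -
  define \<delta> D W where "\<delta> = \<gamma> * \<epsilon>1" and "D = norm_S S (y - x)" and "W = norm_S S (y - x')"
  have \<delta>: "0 < \<delta>" "1 - 1 / \<delta> \<le> 0"
    unfolding \<delta>_def using assms(2-4) by (auto simp: field_simps)
  have W: "0 \<le> W" "W \<le> \<gamma> * \<mu> * D"
    using norm_S_nonneg forward_step_le[OF assms(1) _ fwd] assms(2) by (simp_all add: D_def W_def)
  have "W\<^sup>2 \<le> \<gamma>\<^sup>2 * \<mu>\<^sup>2 * D\<^sup>2"
    using power_mono[OF W(2) W(1)] by (simp add: power_mult_distrib)
  then have "(1 - 1 / \<delta>) * (\<gamma>\<^sup>2 * \<mu>\<^sup>2 * D\<^sup>2) \<le> (1 - 1 / \<delta>) * W\<^sup>2"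
    by (rule mult_left_mono_neg[OF _ \<delta>(2)])
  moreover have "(1 - 1 / \<delta>) * (\<gamma>\<^sup>2 * \<mu>\<^sup>2 * D\<^sup>2) = \<gamma> * \<mu>\<^sup>2 * (\<gamma> - 1 / \<epsilon>1) * D\<^sup>2"
    unfolding \<delta>_def using assms(2,3) by (simp add: field_simps power2_eq_square)
  moreover have "(1 - \<delta>) * (norm_S S (x' - z))\<^sup>2 + (1 - 1 / \<delta>) * W\<^sup>2 \<le> (norm_S S (y - z))\<^sup>2"
    using power2_norm_S_add_ge[OF \<delta>(1), of "x' - z" "y - x'"] unfolding W_def by simp
  ultimately show ?thesis
    unfolding D_def \<delta>_def by linarith
qed

lemma energy_lower_bound:
  assumes "0 \<le> L" "norm_S (op_inv S) u \<le> L * D"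
  shows "(1 - L) * (norm_S S (x - z))\<^sup>2 \<le> (norm_S S (x - z))\<^sup>2 + 2 * inner u (x - z) + L * D\<^sup>2"
proof -
  define E where "E = norm_S S (x - z)"
  have "- inner u (x - z) \<le> L * D * E"
    using abs_inner_le_dual_norm_S[of u "x - z"] mult_right_mono[OF assms(2) norm_S_nonneg[of "x - z"]]
    unfolding E_def by linarith
  moreover have "L * (2 * D * E) \<le> L * (D\<^sup>2 + E\<^sup>2)"
    by (rule mult_left_mono[OF sum_squares_bound assms(1)])
  ultimately show ?thesis
    unfolding E_def[symmetric] by (simp add: algebra_simps)
qed

lemma NFBHF_M_resolvent_step:
  assumes "NFBHF_M S A B C \<gamma> M x0 u0 x y u" "\<gamma> k \<noteq> 0"
  shows "\<exists>a \<in> A (y k). \<gamma> k *\<^sub>R a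
    = S (x k - x (Suc k)) + (u k - u (Suc k)) - \<gamma> k *\<^sub>R (B (y k) + C (x k))"
proof
  let ?a = "M k (x k) - (B (x k) + C (x k)) + (1 / \<gamma> k) *\<^sub>R u k - M k (y k)"
  have a: "?a \<in> A (y k)"
    and x: "x (Suc k) = y k - \<gamma> k *\<^sub>R op_inv S (B (y k)) + \<gamma> k *\<^sub>R op_inv S (B (x k))"
    and u: "u (Suc k) = (\<gamma> k *\<^sub>R M k (y k) - S (y k)) - (\<gamma> k *\<^sub>R M k (x k) - S (x k))"
    using assms(1) unfolding NFBHF_M_def by blast+
  show "?a \<in> A (y k)" by (rule a)
  have "S (x (Suc k)) = S (y k) - \<gamma> k *\<^sub>R B (y k) + \<gamma> k *\<^sub>R B (x k)"
    unfolding x by (simp add: S.add S.diff S.scaleR)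
  then show "\<gamma> k *\<^sub>R ?a = S (x k - x (Suc k)) + (u k - u (Suc k)) - \<gamma> k *\<^sub>R (B (y k) + C (x k))"
    unfolding S.diff u using assms(2) by (simp add: algebra_simps)
qed

end

locale monotone_inclusion = strongly_positive_operator S
  for S :: "'a::{real_inner,complete_space} \<Rightarrow> 'a" +
  fixes A :: "'a \<Rightarrow> 'a set" and B C :: "'a \<Rightarrow> 'a" and \<mu> \<beta> \<rho> :: real and xs as :: 'a
  assumes B_monotone: "monotone_single B"
    and B_lipschitz: "lipschitz_wrt S \<mu> B"
    and C_cocoercive: "cocoercive_wrt S \<beta> C"
    and A_strongly_monotone: "strongly_monotone_wrt S \<rho> A"
    and solution: "as \<in> A xs" "as + B xs + C xs = 0"
begin

lemma resolvent_step_estimate: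
  assumes "\<gamma> > 0" "a \<in> A y"
    and step: "\<gamma> *\<^sub>R a = S (x - x') + (u - u') - \<gamma> *\<^sub>R (B y + C x)"
  shows "\<gamma> * \<rho> * (norm_S S (y - xs))\<^sup>2
    \<le> inner (S (x - x')) (y - xs) + inner (u - u') (y - xs) + \<gamma> * (\<beta> / 4) * (norm_S S (y - x))\<^sup>2"
proof -
  have "\<rho> * (norm_S S (y - xs))\<^sup>2 \<le> inner (a - as) (y - xs)"
    using A_strongly_monotone assms(2) solution(1)
    unfolding strongly_monotone_wrt_def gra_def by fastforce
  then have "\<gamma> * \<rho> * (norm_S S (y - xs))\<^sup>2 \<le> inner (\<gamma> *\<^sub>R (a - as)) (y - xs)"
    using assms(1) by (simp add: mult_left_mono mult.assoc)
  also have "\<gamma> *\<^sub>R (a - as) = S (x - x') + (u - u') - \<gamma> *\<^sub>R (B y - B xs) - \<gamma> *\<^sub>R (C x - C xs)"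
  proof -
    have as_eq: "as = - (B xs + C xs)"
      using solution(2) by (metis add.assoc eq_neg_iff_add_eq_0)
    show ?thesis
      unfolding scaleR_diff_right step as_eq by (simp add: algebra_simps)
  qed
  also have "inner \<dots> (y - xs) = inner (S (x - x')) (y - xs) + inner (u - u') (y - xs)
      - \<gamma> * inner (B y - B xs) (y - xs) - \<gamma> * inner (C x - C xs) (y - xs)"
    by (simp add: inner_diff_left inner_add_left)
  also have "\<dots> \<le> inner (S (x - x')) (y - xs) + inner (u - u') (y - xs) + \<gamma> * (\<beta> / 4) * (norm_S S (y - x))\<^sup>2"
  proof -
    have "0 \<le> \<gamma> * inner (B y - B xs) (y - xs)"
      using B_monotone assms(1) unfolding monotone_single_def by simp
    moreover have "\<gamma> * (- (\<beta> / 4) * (norm_S S (y - x))\<^sup>2) \<le> \<gamma> * inner (C x - C xs) (y - xs)"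
      using cocoercive_inner_ge[OF C_cocoercive] assms(1) by (intro mult_left_mono) simp_all
    ultimately show ?thesis by simp
  qed
  finally show ?thesis .
qed

lemma energy_inequality:
  assumes \<gamma>: "\<gamma> > 0" and L: "0 \<le> L" "0 \<le> L'"
    and a: "a \<in> A y" and step: "\<gamma> *\<^sub>R a = S (x - x') + (u - u') - \<gamma> *\<^sub>R (B y + C x)"
    and fwd: "x' = y - \<gamma> *\<^sub>R op_inv S (B y) + \<gamma> *\<^sub>R op_inv S (B x)"
    and u: "norm_S (op_inv S) u \<le> L * d"
    and u': "norm_S (op_inv S) u' \<le> L' * norm_S S (y - x)"
  shows "(norm_S S (x' - xs))\<^sup>2 + 2 * inner u' (x' - xs) + L' * (norm_S S (y - x))\<^sup>2
      + (1 - L - L' - 2 * \<gamma> * L' * \<mu> - \<gamma>\<^sup>2 * \<mu>\<^sup>2 - \<gamma> * \<beta> / 2) * (norm_S S (y - x))\<^sup>2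
      + 2 * \<gamma> * \<rho> * (norm_S S (y - xs))\<^sup>2
    \<le> (norm_S S (x - xs))\<^sup>2 + 2 * inner u (x - xs) + L * d\<^sup>2"
proof -
  define D W where "D = norm_S S (y - x)" and "W = norm_S S (y - x')"
  have D: "0 \<le> D" and W: "0 \<le> W" "W \<le> \<gamma> * \<mu> * D"
    using norm_S_nonneg forward_step_le[OF B_lipschitz _ fwd] \<gamma> by (simp_all add: D_def W_def)
  have W2: "W\<^sup>2 \<le> \<gamma>\<^sup>2 * \<mu>\<^sup>2 * D\<^sup>2"
    using power_mono[OF W(2) W(1)] by (simp add: power_mult_distrib)
  have three: "2 * inner (S (x - x')) (y - xs)
      = (norm_S S (x - xs))\<^sup>2 - (norm_S S (x' - xs))\<^sup>2 + W\<^sup>2 - D\<^sup>2"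
    unfolding D_def W_def by (rule three_point_identity)
  have split: "inner (u - u') (y - xs)
      = inner u (x - xs) + inner u (y - x) - inner u' (x' - xs) - inner u' (y - x')"
    by (simp add: inner_diff_left inner_diff_right)
  have "inner u (y - x) \<le> L * d * D"
    using abs_inner_le_dual_norm_S[of u "y - x"] mult_right_mono[OF u D] unfolding D_def by linarith
  moreover have "L * (2 * d * D) \<le> L * (d\<^sup>2 + D\<^sup>2)"
    by (rule mult_left_mono[OF sum_squares_bound L(1)])
  ultimately have u_term: "2 * inner u (y - x) \<le> L * (d\<^sup>2 + D\<^sup>2)"
    by simp
  have "- inner u' (y - x') \<le> L' * D * W"
    using abs_inner_le_dual_norm_S[of u' "y - x'"] mult_right_mono[OF u' W(1)] unfolding D_def W_def
    by linarith
  also have "\<dots> \<le> L' * D * (\<gamma> * \<mu> * D)"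
    using L(2) D W(2) by (simp add: mult_left_mono)
  finally have u'_term: "- inner u' (y - x') \<le> \<gamma> * L' * \<mu> * D\<^sup>2"
    by (simp add: power2_eq_square algebra_simps)
  show ?thesis
    using resolvent_step_estimate[OF \<gamma> a step] three split u_term u'_term W2
    unfolding D_def[symmetric] by (simp add: algebra_simps power2_eq_square)
qed

lemma descent_step:
  assumes \<gamma>: "\<gamma> > 0" and L: "0 \<le> L" "0 \<le> L'"
    and a: "a \<in> A y" and step: "\<gamma> *\<^sub>R a = S (x - x') + (u - u') - \<gamma> *\<^sub>R (B y + C x)"
    and fwd: "x' = y - \<gamma> *\<^sub>R op_inv S (B y) + \<gamma> *\<^sub>R op_inv S (B x)"
    and u: "norm_S (op_inv S) u \<le> L * d"
    and u': "norm_S (op_inv S) u' \<le> L' * norm_S S (y - x)"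
    and \<rho>: "0 \<le> \<rho>" and \<epsilon>: "\<epsilon>1 > 0" "\<epsilon>2 > 0" and t: "0 \<le> t"
    and c1: "\<gamma> < 1 / \<epsilon>1"
    and c2: "t * (1 + L' / \<epsilon>2) \<le> 2 * \<gamma> * \<rho> * (1 - \<gamma> * \<epsilon>1)"
    and c3: "t * L' * (\<epsilon>2 + 1) \<le> (1 - L - L' - 2 * \<gamma> * L' * \<mu> - \<gamma>\<^sup>2 * \<mu>\<^sup>2 - \<gamma> * \<beta> / 2)
      + 2 * \<gamma>\<^sup>2 * \<rho> * \<mu>\<^sup>2 * (\<gamma> - 1 / \<epsilon>1)"
  shows "(1 + t) * ((norm_S S (x' - xs))\<^sup>2 + 2 * inner u' (x' - xs) + L' * (norm_S S (y - x))\<^sup>2)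
    \<le> (norm_S S (x - xs))\<^sup>2 + 2 * inner u (x - xs) + L * d\<^sup>2"
proof -
  define E D where "E = norm_S S (x' - xs)" and "D = norm_S S (y - x)"
  define \<kappa> \<nu> where "\<kappa> = 1 - L - L' - 2 * \<gamma> * L' * \<mu> - \<gamma>\<^sup>2 * \<mu>\<^sup>2 - \<gamma> * \<beta> / 2"
    and "\<nu> = 2 * \<gamma>\<^sup>2 * \<rho> * \<mu>\<^sup>2 * (\<gamma> - 1 / \<epsilon>1)"
  have E: "0 \<le> E" by (simp add: E_def norm_S_nonneg)
  have energy: "E\<^sup>2 + 2 * inner u' (x' - xs) + L' * D\<^sup>2 + \<kappa> * D\<^sup>2 + 2 * \<gamma> * \<rho> * (norm_S S (y - xs))\<^sup>2
      \<le> (norm_S S (x - xs))\<^sup>2 + 2 * inner u (x - xs) + L * d\<^sup>2"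
    using energy_inequality[OF \<gamma> L a step fwd u u'] unfolding E_def D_def \<kappa>_def .
  have "2 * \<gamma> * \<rho> * ((1 - \<gamma> * \<epsilon>1) * E\<^sup>2 + \<gamma> * \<mu>\<^sup>2 * (\<gamma> - 1 / \<epsilon>1) * D\<^sup>2)
      \<le> 2 * \<gamma> * \<rho> * (norm_S S (y - xs))\<^sup>2"
    using norm_resolvent_point_ge[OF B_lipschitz \<gamma> \<epsilon>(1) c1 fwd, of xs] \<gamma> \<rho>
    unfolding E_def D_def by (simp add: mult_left_mono)
  moreover have "2 * \<gamma> * \<rho> * ((1 - \<gamma> * \<epsilon>1) * E\<^sup>2 + \<gamma> * \<mu>\<^sup>2 * (\<gamma> - 1 / \<epsilon>1) * D\<^sup>2)
      = 2 * \<gamma> * \<rho> * (1 - \<gamma> * \<epsilon>1) * E\<^sup>2 + \<nu> * D\<^sup>2"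
    unfolding \<nu>_def by (simp add: algebra_simps power2_eq_square)
  moreover have "t * (2 * inner u' (x' - xs)) \<le> t * (L' * (\<epsilon>2 * D\<^sup>2 + E\<^sup>2 / \<epsilon>2))"
  proof (rule mult_left_mono[OF _ t])
    have "inner u' (x' - xs) \<le> L' * D * E"
      using abs_inner_le_dual_norm_S[of u' "x' - xs"] mult_right_mono[OF u' E]
      unfolding D_def E_def by linarith
    moreover have "L' * (2 * D * E) \<le> L' * (\<epsilon>2 * D\<^sup>2 + E\<^sup>2 / \<epsilon>2)"
      by (rule mult_left_mono[OF mult2_le_weighted_squares[OF \<epsilon>(2)] L(2)])
    ultimately show "2 * inner u' (x' - xs) \<le> L' * (\<epsilon>2 * D\<^sup>2 + E\<^sup>2 / \<epsilon>2)" by simp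
  qed
  moreover have "t * L' * (\<epsilon>2 + 1) * D\<^sup>2 \<le> (\<kappa> + \<nu>) * D\<^sup>2"
    using c3 unfolding \<kappa>_def \<nu>_def by (simp add: mult_right_mono)
  moreover have "t * (1 + L' / \<epsilon>2) * E\<^sup>2 \<le> 2 * \<gamma> * \<rho> * (1 - \<gamma> * \<epsilon>1) * E\<^sup>2"
    using c2 by (simp add: mult_right_mono)
  ultimately have "(1 + t) * (E\<^sup>2 + 2 * inner u' (x' - xs) + L' * D\<^sup>2)
      \<le> (norm_S S (x - xs))\<^sup>2 + 2 * inner u (x - xs) + L * d\<^sup>2"
    using energy by (simp add: algebra_simps)
  then show ?thesis unfolding E_def D_def .
qed

end

theorem theorem3p2:
  fixes S :: "'a::{real_inner,complete_space} \<Rightarrow> 'a"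
    and A :: "'a \<Rightarrow> 'a set" and B C :: "'a \<Rightarrow> 'a"
    and \<mu> \<beta> \<gamma>0 \<rho> \<epsilon>1 \<epsilon>2 t :: real
    and \<gamma> L :: "nat \<Rightarrow> real" and M :: "nat \<Rightarrow> 'a \<Rightarrow> 'a"
    and xs x0 u0 :: 'a and x y u :: "nat \<Rightarrow> 'a"
  assumes S: "strongly_pos_op S"
    and A: "maximally_monotone A"
    and B: "monotone_single B" "\<mu> \<ge> 0" "lipschitz_wrt S \<mu> B"
    and C: "cocoercive_wrt S \<beta> C" "\<beta> > 0"
    and zer_ne: "zer3 A B C \<noteq> {}"
    and gam: "\<gamma>0 > 0" "\<And>k. \<gamma> k \<ge> \<gamma>0"
    and Lk: "\<And>k. 0 \<le> L k \<and> L k < 1"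
    and M: "\<And>k. lipschitz_wrt S (L k) (\<lambda>z. \<gamma> k *\<^sub>R M k z - S z)"
    and Astr: "\<rho> > 0" "strongly_monotone_wrt S \<rho> A"
    and Lbar: "(SUP k. L k) < 1"
    and eps: "\<epsilon>1 > 0" "\<epsilon>2 > 0" "t > 0"
    and c1: "\<And>k. k \<ge> 1 \<Longrightarrow> \<gamma> k < 1 / \<epsilon>1"
    and c2: "\<And>k. k \<ge> 1 \<Longrightarrow> t * (1 + L k / \<epsilon>2) \<le> 2 * \<gamma> k * \<rho> * (1 - \<gamma> k * \<epsilon>1)"
    and c3: "\<And>k. k \<ge> 1 \<Longrightarrow> t * L k * (\<epsilon>2 + 1) \<le>
              (1 - L (k - 1) - L k - 2 * \<gamma> k * L k * \<mu> - (\<gamma> k)\<^sup>2 * \<mu>\<^sup>2 - \<gamma> k * \<beta> / 2)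
              + 2 * (\<gamma> k)\<^sup>2 * \<rho> * \<mu>\<^sup>2 * (\<gamma> k - 1 / \<epsilon>1)"
    and xs: "xs \<in> zer3 A B C"
    and alg: "NFBHF_M S A B C \<gamma> M x0 u0 x y u"
  shows "(\<forall>k\<ge>1. (1 - L k) * (norm_S S (x (Suc k) - xs))\<^sup>2 \<le>
            ((norm_S S (x 1 - xs))\<^sup>2 + 2 * inner (u 1) (x 1 - xs) + L 0 * (norm_S S (y 0 - x 0))\<^sup>2)
            / (1 + t) ^ k)
       \<and> (\<exists>c q. 0 \<le> c \<and> 0 < q \<and> q < 1 \<and> (\<forall>k. norm_S S (x k - xs) \<le> c * q ^ k))"
proof -
  obtain as where as: "as \<in> A xs" "as + B xs + C xs = 0" using xs unfolding zer3_def by auto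
  interpret monotone_inclusion S A B C \<mu> \<beta> \<rho> xs as
    using S B(1,3) C(1) Astr(2) as by unfold_locales
  have \<gamma>_pos: "\<gamma> k > 0" for k using gam(1) gam(2)[of k] by linarith
  have u_le: "norm_S (op_inv S) (u (Suc k)) \<le> L k * norm_S S (y k - x k)" for k
    using M[of k] alg unfolding lipschitz_wrt_def NFBHF_M_def by simp
  define \<Phi> where "\<Phi> k = (norm_S S (x k - xs))\<^sup>2 + 2 * inner (u k) (x k - xs)
      + L (k - 1) * (norm_S S (y (k - 1) - x (k - 1)))\<^sup>2" for k
  have "(1 + t) * \<Phi> (Suc k) \<le> \<Phi> k" if "k \<ge> 1" for k
  proof -
    obtain a where "a \<in> A (y k)"
      "\<gamma> k *\<^sub>R a = S (x k - x (Suc k)) + (u k - u (Suc k)) - \<gamma> k *\<^sub>R (B (y k) + C (x k))"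
      using NFBHF_M_resolvent_step[OF alg, of k] \<gamma>_pos[of k] by auto
    moreover have "u k = u (Suc (k - 1))" using that by simp
    ultimately show ?thesis
      using descent_step[OF \<gamma>_pos _ _ _ _ _ u_le[of "k - 1"] u_le[of k] _ eps(1,2) _
          c1[OF that] c2[OF that] c3[OF that]] alg Lk Astr(1) eps(3)
      unfolding \<Phi>_def NFBHF_M_def by simp
  qed
  then have "\<Phi> (Suc k) \<le> \<Phi> 1 / (1 + t) ^ k" for k
    using geometric_decay[of "1 + t" 1 \<Phi> k] eps(3) by simp
  then have decay: "(1 - L k) * (norm_S S (x (Suc k) - xs))\<^sup>2 \<le> \<Phi> 1 / (1 + t) ^ k" for k
    using energy_lower_bound[OF _ u_le, of k] Lk order_trans unfolding \<Phi>_def by fastforce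
  have "L k \<le> (SUP k. L k)" for k
    using Lk by (intro cSUP_upper bdd_aboveI[of _ 1]) (auto intro: less_imp_le)
  then have "(1 - (SUP k. L k)) * (norm_S S (x (Suc k) - xs))\<^sup>2 \<le> \<Phi> 1 / (1 + t) ^ k" for k
    using decay[of k] by (meson diff_left_mono mult_right_mono order_trans zero_le_power2)
  then have "\<exists>c q. 0 \<le> c \<and> 0 < q \<and> q < 1 \<and> (\<forall>k. norm_S S (x k - xs) \<le> c * q ^ k)"
    using R_linear_convergence[of "1 - (SUP k. L k)" t "\<lambda>k. norm_S S (x k - xs)" "\<Phi> 1"] Lbar eps(3)
    by simp
  with decay show ?thesis
    unfolding \<Phi>_def by simp
qed

end
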